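(* Let $\kappa,\theta,\sigma>0$ and $\chi>\gamma>0$ be constants. Define $$\xi:=\sqrt{\kappa^2+2\sigma^2(\chi-\gamma)},\quad \alpha:=\frac{\kappa\theta}{\sigma^2}\Big(1-\frac{\kappa}{\xi}\Big),\quad \beta:=\frac{2\kappa\theta}{\sigma^2},\quad \zeta:=\frac{2\xi}{\sigma^2},\quad \nu:=\frac{\alpha\zeta}{\beta}=\frac{\xi-\kappa}{\sigma^2},$$ and for $r\in(0,\infty)$ let $$u_+(r):=e^{-\nu r}M(\alpha,\beta,\zeta r),\qquad u_-(r):=e^{-\nu r}U(\alpha,\beta,\zeta r).$$ Then $u_+$ is increasing on $(0,\infty)$ and $u_-$ is decreasing on $(0,\infty)$.
   Context: $M$ and $U$ denote the confluent hypergeometric (Kummer) functions of the first and second kind: $M(a,b,z)=\sum_{n\ge 0}\frac{(a)_n}{(b)_n}\frac{z^n}{n!}$ with $(a)_n=a(a+1)\cdots(a+n-1)$ the Pochhammer symbol, and for $a>0$, $U(a,b,z)=\frac{1}{\Gamma(a)}\int_0^\infty e^{-zt}t^{a-1}(1+t)^{b-a-1}\,dt$ for $z>0$. The functions $u_\pm$ are solutions of the ODE $\kappa(\theta-r)u'(r)+\tfrac12\sigma^2 r\,u''(r)-(\chi-\gamma)r\,u(r)=0$ on $(0,\infty)$, arising from a Cox–Ingersoll–Ross process $dR_t=\kappa(\theta-R_t)dt+\sigma\sqrt{R_t}\,dW_t$. *)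

theory Defs
  imports "HOL-Analysis.Analysis"
begin

definition kummerM :: "real \<Rightarrow> real \<Rightarrow> real \<Rightarrow> real" where
  "kummerM a b z = (\<Sum>n. pochhammer a n / pochhammer b n * z ^ n / fact n)"

text \<open>Tricomi's confluent hypergeometric function of the second kind U(a,b,z),
  via its integral representation (for a > 0, z > 0).\<close>
definition kummerU :: "real \<Rightarrow> real \<Rightarrow> real \<Rightarrow> real" where
  "kummerU a b z = (1 / Gamma a) *
     (LBINT t:{0<..}. exp (- z * t) * t powr (a - 1) * (1 + t) powr (b - a - 1))"

end

theory Submission
  imports Defs
begin

text \<open>Since \<open>\<partial>\<^sub>z M(a,b,z) = (a/b) M(a+1,b+1,z)\<close> and \<open>\<nu> = \<zeta>\<alpha>/\<beta>\<close>, the derivative of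
  \<open>u\<^sub>+\<close> is \<open>\<nu> exp(-\<nu>r) (M(\<alpha>+1,\<beta>+1,\<zeta>r) - M(\<alpha>,\<beta>,\<zeta>r))\<close>. It is positive because
  \<open>0 < \<alpha> < \<beta>\<close> makes every Taylor coefficient of \<open>M(\<alpha>+1,\<beta>+1,\<cdot>)\<close> dominate that of
  \<open>M(\<alpha>,\<beta>,\<cdot>)\<close>, strictly so for the linear term.

  For \<open>u\<^sub>-\<close>, the integrand defining \<open>U(\<alpha>,\<beta>,\<zeta>r)\<close> is positive and strictly decreasing
  in \<open>r\<close>, so \<open>U(\<alpha>,\<beta>,\<zeta>r)\<close> is positive and strictly decreasing in \<open>r\<close>, and multiplying by
  the positive nonincreasing factor \<open>exp(-\<nu>r)\<close> preserves this. The integrand is integrable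
  since \<open>(1+t)\<^sup>p \<le> 2\<^bsup>|p|\<^esup>(1 + t\<^bsup>|p|\<^esup>)\<close> dominates it by two Gamma-function integrands.\<close>

lemma set_integral_strict_mono:
  fixes f g :: "'a \<Rightarrow> real"
  assumes f: "set_integrable M A f" and g: "set_integrable M A g"
    and A: "A \<in> sets M" "A \<notin> null_sets M"
    and less: "\<And>x. x \<in> A \<Longrightarrow> f x < g x"
  shows "(LINT x:A|M. f x) < (LINT x:A|M. g x)"
proof -
  define D where "D x = indicator A x *\<^sub>R (g x - f x)" for x
  have D_int: "integrable M D"
    using set_integral_diff(1)[OF g f] unfolding set_integrable_def D_def .
  have D_nonneg: "AE x in M. 0 \<le> D x"
    using less by (intro AE_I2) (auto simp: D_def indicator_def less_imp_le)
  have "integral\<^sup>L M D \<noteq> 0"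
  proof
    assume "integral\<^sup>L M D = 0"
    then have "AE x in M. D x = 0"
      using integral_nonneg_eq_0_iff_AE[OF D_int D_nonneg] by simp
    then have "AE x in M. x \<notin> A"
      by (rule eventually_mono) (use less in \<open>fastforce simp: D_def\<close>)
    with A show False
      using AE_iff_null_sets by blast
  qed
  moreover have "integral\<^sup>L M D \<ge> 0"
    using D_nonneg by (rule integral_nonneg_AE)
  ultimately have "0 < integral\<^sup>L M D"
    by simp
  also have "integral\<^sup>L M D = (LINT x:A|M. g x) - (LINT x:A|M. f x)"
    using set_integral_diff(2)[OF g f] unfolding set_lebesgue_integral_def D_def .
  finally show ?thesis
    by simp
qed

lemma greaterThan_notin_null_sets_lborel: "{a<..} \<notin> null_sets (lborel :: real measure)"
proof
  assume "{a<..} \<in> null_sets (lborel :: real measure)"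
  then have "{a<..a + 1} \<in> null_sets (lborel :: real measure)"
    by (rule null_sets_subset) auto
  then show False
    by (simp add: null_sets_def)
qed

lemma set_integrable_powr_exp:
  fixes q x :: real
  assumes "q > 0" "x > 0"
  shows "set_integrable lborel {0<..} (\<lambda>t. t powr (q - 1) * exp (- x * t))"
proof -
  let ?g = "\<lambda>t::real. t powr (q - 1) * exp (- x * t)"
  have "set_integrable lebesgue {0<..}
      (\<lambda>t. complex_of_real t powr (complex_of_real q - 1) / of_real (exp (x * t)))"
    using absolutely_integrable_Gamma_integral[of "complex_of_real q" x] assms by simp
  then have "set_integrable lebesgue {0<..} ?g"
  proof (rule set_integrable_bound)
    show "set_borel_measurable lebesgue {0<..} ?g"
      unfolding set_borel_measurable_def
      by (intro measurable_completion borel_measurable_continuous_on_indicator continuous_intros) auto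
    have "norm (?g t) = norm (complex_of_real t powr (complex_of_real q - 1) / of_real (exp (x * t)))"
      if "t > 0" for t
    proof -
      have "complex_of_real t powr (complex_of_real q - 1) = of_real (t powr (q - 1))"
        using that powr_of_real[of t "q - 1"] by simp
      then show ?thesis by (simp add: norm_divide exp_minus field_simps)
    qed
    then show "AE t in lebesgue. t \<in> {0<..} \<longrightarrow> norm (?g t) \<le>
        norm (complex_of_real t powr (complex_of_real q - 1) / of_real (exp (x * t)))"
      by (intro AE_I2) simp
  qed
  moreover have "(\<lambda>t. indicator {0<..} t *\<^sub>R ?g t) \<in> borel_measurable lborel"
    by (auto intro!: borel_measurable_continuous_on_indicator continuous_intros)
  ultimately show ?thesis
    unfolding set_integrable_def using integrable_completion by blast
qed

lemma one_plus_powr_le: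
  fixes t p :: real
  assumes "t \<ge> 0"
  shows "(1 + t) powr p \<le> 2 powr \<bar>p\<bar> * (1 + t powr \<bar>p\<bar>)"
proof -
  have "(1 + t) powr p \<le> (1 + t) powr \<bar>p\<bar>"
    using assms by (intro powr_mono) auto
  also have "\<dots> \<le> (2 * max 1 t) powr \<bar>p\<bar>"
    using assms by (intro powr_mono2) auto
  also have "\<dots> = 2 powr \<bar>p\<bar> * max 1 t powr \<bar>p\<bar>"
    using assms by (simp add: powr_mult)
  also have "max 1 t powr \<bar>p\<bar> \<le> 1 + t powr \<bar>p\<bar>"
    by (cases "t \<le> 1") (auto simp: max_def)
  finally show ?thesis by simp
qed

lemma kummerU_integrand_integrable:
  fixes a z p :: real
  assumes "a > 0" "z > 0"
  shows "set_integrable lborel {0<..} (\<lambda>t. exp (- z * t) * t powr (a - 1) * (1 + t) powr p)"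
proof (rule set_integrable_bound)
  let ?G = "\<lambda>q t. t powr (q - 1) * exp (- z * t)"
  show "set_integrable lborel {0<..} (\<lambda>t. 2 powr \<bar>p\<bar> * (?G a t + ?G (a + \<bar>p\<bar>) t))"
    using assms by (intro set_integrable_mult_right set_integral_add set_integrable_powr_exp) auto
  show "set_borel_measurable lborel {0<..} (\<lambda>t. exp (- z * t) * t powr (a - 1) * (1 + t) powr p)"
    unfolding set_borel_measurable_def
    by (auto intro!: borel_measurable_continuous_on_indicator continuous_intros)
  have "exp (- z * t) * t powr (a - 1) * (1 + t) powr p
      \<le> 2 powr \<bar>p\<bar> * (?G a t + ?G (a + \<bar>p\<bar>) t)" if "t > 0" for t
  proof -
    have "exp (- z * t) * t powr (a - 1) * (1 + t) powr p
        \<le> exp (- z * t) * t powr (a - 1) * (2 powr \<bar>p\<bar> * (1 + t powr \<bar>p\<bar>))"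
      using that one_plus_powr_le[of t p] by (intro mult_left_mono) auto
    also have "\<dots> = 2 powr \<bar>p\<bar> * (?G a t + ?G (a + \<bar>p\<bar>) t)"
      using that powr_add[of t "\<bar>p\<bar>" "a - 1"] by (simp add: algebra_simps)
    finally show ?thesis .
  qed
  then show "AE t in lborel. t \<in> {0<..} \<longrightarrow> norm (exp (- z * t) * t powr (a - 1) * (1 + t) powr p)
      \<le> norm (2 powr \<bar>p\<bar> * (?G a t + ?G (a + \<bar>p\<bar>) t))"
    by (intro AE_I2) auto
qed

lemma kummerU_pos:
  fixes a b z :: real
  assumes "a > 0" "z > 0"
  shows "kummerU a b z > 0"
proof -
  have "(LBINT t::real:{0<..}. 0) < (LBINT t:{0<..}. exp (- z * t) * t powr (a - 1) * (1 + t) powr (b - a - 1))"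
    using assms greaterThan_notin_null_sets_lborel
    by (intro set_integral_strict_mono kummerU_integrand_integrable) (auto simp: set_integrable_def)
  then show ?thesis
    using Gamma_real_pos[OF \<open>a > 0\<close>] by (simp add: kummerU_def)
qed

lemma kummerU_strict_antimono:
  fixes a b :: real
  assumes "a > 0"
  shows "strict_antimono_on {0<..} (kummerU a b)"
proof (rule monotone_onI)
  fix y z :: real
  assume "y \<in> {0<..}" "z \<in> {0<..}" "y < z"
  have "exp (- z * t) * t powr (a - 1) * (1 + t) powr (b - a - 1)
      < exp (- y * t) * t powr (a - 1) * (1 + t) powr (b - a - 1)" if "t \<in> {0<..}" for t
    using that \<open>y < z\<close> by (intro mult_strict_right_mono) auto
  then have "(LBINT t:{0<..}. exp (- z * t) * t powr (a - 1) * (1 + t) powr (b - a - 1))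
      < (LBINT t:{0<..}. exp (- y * t) * t powr (a - 1) * (1 + t) powr (b - a - 1))"
    using assms \<open>y \<in> {0<..}\<close> \<open>z \<in> {0<..}\<close> greaterThan_notin_null_sets_lborel
    by (intro set_integral_strict_mono kummerU_integrand_integrable) auto
  then show "kummerU a b z < kummerU a b y"
    using Gamma_real_pos[OF assms] by (simp add: kummerU_def divide_strict_right_mono)
qed

lemma exp_mult_kummerU_strict_antimono:
  fixes a b c z :: real
  assumes "a > 0" "c \<ge> 0" "z > 0"
  shows "strict_antimono_on {0<..} (\<lambda>r. exp (- c * r) * kummerU a b (z * r))"
proof (rule monotone_onI)
  fix r s :: real
  assume "r \<in> {0<..}" "s \<in> {0<..}" "r < s"
  then have "exp (- c * s) * kummerU a b (z * s) \<le> exp (- c * r) * kummerU a b (z * s)"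
    using assms kummerU_pos[of a "z * s" b] by (intro mult_right_mono) (auto intro: mult_left_mono)
  also have "\<dots> < exp (- c * r) * kummerU a b (z * r)"
    using \<open>r \<in> {0<..}\<close> \<open>s \<in> {0<..}\<close> \<open>r < s\<close> assms
      kummerU_strict_antimono[OF \<open>a > 0\<close>, of b, THEN monotone_onD, of "z * r" "z * s"]
    by simp
  finally show "exp (- c * s) * kummerU a b (z * s) < exp (- c * r) * kummerU a b (z * r)" .
qed

definition kummer_coeff :: "real \<Rightarrow> real \<Rightarrow> nat \<Rightarrow> real" where
  "kummer_coeff a b n = pochhammer a n / pochhammer b n / fact n"

lemma kummerM_eq_suminf: "kummerM a b z = (\<Sum>n. kummer_coeff a b n * z ^ n)"
  unfolding kummerM_def kummer_coeff_def by simp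

lemma pochhammer_mono:
  fixes a b :: real
  assumes "0 < a" "a \<le> b"
  shows "pochhammer a n \<le> pochhammer b n"
proof (induction n)
  case (Suc n)
  then show ?case
    unfolding pochhammer_Suc using assms by (intro mult_mono) (auto intro: pochhammer_nonneg)
qed simp

lemma norm_kummer_coeff_le:
  assumes "0 < a" "a \<le> b"
  shows "norm (kummer_coeff a b n * z ^ n) \<le> norm z ^ n / fact n"
proof -
  have "pochhammer a n / pochhammer b n \<le> 1"
    using pochhammer_mono[OF assms, of n] pochhammer_pos[of b n] assms by simp
  moreover have "pochhammer a n / pochhammer b n \<ge> 0"
    using pochhammer_pos[of b n] pochhammer_pos[of a n] assms by simp
  ultimately have "\<bar>pochhammer a n / pochhammer b n\<bar> \<le> 1"
    by simp
  then have "\<bar>pochhammer a n / pochhammer b n\<bar> * (norm z ^ n / fact n) \<le> norm z ^ n / fact n"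
    by (intro mult_left_le_one_le) auto
  then show ?thesis
    by (simp add: kummer_coeff_def abs_mult power_abs)
qed

lemma summable_kummer_series:
  assumes "0 < a" "a \<le> b"
  shows "summable (\<lambda>n. kummer_coeff a b n * z ^ n)"
proof -
  have "summable (\<lambda>n. norm z ^ n / fact n)"
    using summable_exp[of "norm z"] by (simp add: divide_inverse ac_simps)
  then show ?thesis
    using norm_kummer_coeff_le[OF assms] by (rule summable_comparison_test')
qed

lemma diffs_kummer_coeff:
  assumes "0 < b"
  shows "diffs (kummer_coeff a b) n = a / b * kummer_coeff (a + 1) (b + 1) n"
proof -
  have "diffs (kummer_coeff a b) n = pochhammer a (Suc n) / pochhammer b (Suc n) / fact n"
    unfolding diffs_def kummer_coeff_def by simp
  also have "\<dots> = a / b * kummer_coeff (a + 1) (b + 1) n"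
    unfolding pochhammer_rec kummer_coeff_def using assms by simp
  finally show ?thesis .
qed

lemma kummer_coeff_le_shift:
  assumes "0 < a" "a \<le> b"
  shows "kummer_coeff a b n \<le> kummer_coeff (a + 1) (b + 1) n"
proof -
  have shift: "pochhammer (c + 1) n = (c + n) / c * pochhammer c n" if "c > 0" for c :: real
    using pochhammer_rec[of c n] pochhammer_rec'[of c n] that by (simp add: field_simps)
  have "kummer_coeff (a + 1) (b + 1) n = kummer_coeff a b n * ((a + n) * b / (a * (b + n)))"
    using assms pochhammer_pos[of b n]
    by (simp add: kummer_coeff_def shift) (simp add: field_simps)
  moreover have "kummer_coeff a b n \<ge> 0"
    using assms by (simp add: kummer_coeff_def pochhammer_nonneg)
  moreover have "a * (b + n) \<le> (a + n) * b"
    using assms by (simp add: algebra_simps mult_right_mono)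
  then have "(a + n) * b / (a * (b + n)) \<ge> 1"
    using assms by (simp add: le_divide_eq_1)
  ultimately show ?thesis
    by (metis mult.right_neutral mult_left_mono)
qed

lemma kummerM_less_shift:
  assumes "0 < a" "a < b" "x > 0"
  shows "kummerM a b x < kummerM (a + 1) (b + 1) x"
proof -
  let ?c = "\<lambda>n. kummer_coeff (a + 1) (b + 1) n * x ^ n - kummer_coeff a b n * x ^ n"
  have sums: "summable (\<lambda>n. kummer_coeff a b n * x ^ n)"
    "summable (\<lambda>n. kummer_coeff (a + 1) (b + 1) n * x ^ n)"
    using assms by (auto intro: summable_kummer_series)
  have "a / b < (a + 1) / (b + 1)"
    using assms by (simp add: field_simps)
  then have "a / b * x < (a + 1) / (b + 1) * x"
    using \<open>x > 0\<close> by (rule mult_strict_right_mono)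
  then have "0 < ?c 1"
    by (simp add: kummer_coeff_def)
  moreover have "0 \<le> ?c n" for n
    using kummer_coeff_le_shift[of a b n] assms by (simp add: mult_right_mono)
  ultimately have "0 < suminf ?c"
    using sums by (intro suminf_pos2[where i = 1] summable_diff) auto
  also have "suminf ?c = kummerM (a + 1) (b + 1) x - kummerM a b x"
    unfolding kummerM_eq_suminf using suminf_diff[OF sums(2,1)] by simp
  finally show ?thesis
    by simp
qed

lemma has_real_derivative_kummerM:
  assumes "0 < a" "a \<le> b"
  shows "(kummerM a b has_real_derivative a / b * kummerM (a + 1) (b + 1) x) (at x)"
proof -
  have "((\<lambda>x. \<Sum>n. kummer_coeff a b n * x ^ n) has_real_derivative
      (\<Sum>n. diffs (kummer_coeff a b) n * x ^ n)) (at x)"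
    using summable_kummer_series[OF assms] by (intro termdiffs_strong_converges_everywhere) auto
  moreover have "(\<Sum>n. diffs (kummer_coeff a b) n * x ^ n) = a / b * kummerM (a + 1) (b + 1) x"
    unfolding kummerM_eq_suminf diffs_kummer_coeff[OF order.strict_trans2[OF assms]] mult.assoc
    using assms by (intro suminf_mult summable_kummer_series) auto
  ultimately show ?thesis
    unfolding kummerM_eq_suminf[abs_def] by simp
qed

lemma exp_mult_kummerM_strict_mono:
  fixes a b z :: real
  assumes "0 < a" "a < b" "z > 0"
  shows "strict_mono_on {0<..} (\<lambda>r. exp (- (z * a / b) * r) * kummerM a b (z * r))"
proof -
  define \<nu> where "\<nu> = z * a / b"
  have "0 < \<nu>"
    unfolding \<nu>_def using assms by simp
  have "strict_mono_on {0<..} (\<lambda>r. exp (- \<nu> * r) * kummerM a b (z * r))"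
  proof (rule strict_mono_onI)
    fix r s :: real
    assume "r \<in> {0<..}" "s \<in> {0<..}" "r < s"
    show "exp (- \<nu> * r) * kummerM a b (z * r) < exp (- \<nu> * s) * kummerM a b (z * s)"
    proof (rule DERIV_pos_imp_increasing[OF \<open>r < s\<close>])
      fix y
      assume "r \<le> y" "y \<le> s"
      with \<open>r \<in> {0<..}\<close> have "y > 0"
        by simp
      let ?d = "\<nu> * exp (- \<nu> * y) * (kummerM (a + 1) (b + 1) (z * y) - kummerM a b (z * y))"
      have "((\<lambda>r. exp (- \<nu> * r) * kummerM a b (z * r)) has_real_derivative
          exp (- \<nu> * y) * (- \<nu>) * kummerM a b (z * y)
            + exp (- \<nu> * y) * (a / b * kummerM (a + 1) (b + 1) (z * y) * z)) (at y)"
        using assms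
        by (auto intro!: derivative_eq_intros DERIV_chain2[OF has_real_derivative_kummerM]
            simp: algebra_simps)
      also have "exp (- \<nu> * y) * (- \<nu>) * kummerM a b (z * y)
            + exp (- \<nu> * y) * (a / b * kummerM (a + 1) (b + 1) (z * y) * z) = ?d"
        unfolding \<nu>_def by (simp add: algebra_simps)
      finally have "((\<lambda>r. exp (- \<nu> * r) * kummerM a b (z * r)) has_real_derivative ?d) (at y)" .
      moreover have "0 < ?d"
        using \<open>0 < \<nu>\<close> assms \<open>y > 0\<close> kummerM_less_shift[of a b "z * y"] by simp
      ultimately show "\<exists>d. ((\<lambda>r. exp (- \<nu> * r) * kummerM a b (z * r)) has_real_derivative d) (at y) \<and> 0 < d"
        by (intro exI conjI)
    qed
  qed
  then show ?thesis
    unfolding \<nu>_def .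
qed

theorem mainTheorem1:
  fixes \<kappa> \<theta> \<sigma> chi \<gamma> :: real
  assumes "\<kappa> > 0" "\<theta> > 0" "\<sigma> > 0" "chi > \<gamma>" "\<gamma> > 0"
  defines "\<xi> \<equiv> sqrt (\<kappa>^2 + 2 * \<sigma>^2 * (chi - \<gamma>))"
  defines "\<alpha> \<equiv> \<kappa> * \<theta> / \<sigma>^2 * (1 - \<kappa> / \<xi>)"
  defines "\<beta> \<equiv> 2 * \<kappa> * \<theta> / \<sigma>^2"
  defines "\<zeta> \<equiv> 2 * \<xi> / \<sigma>^2"
  defines "\<nu> \<equiv> (\<xi> - \<kappa>) / \<sigma>^2"
  shows "strict_mono_on {0<..} (\<lambda>r. exp (- \<nu> * r) * kummerM \<alpha> \<beta> (\<zeta> * r))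
       \<and> strict_antimono_on {0<..} (\<lambda>r. exp (- \<nu> * r) * kummerU \<alpha> \<beta> (\<zeta> * r))"
proof -
  have "sqrt (\<kappa>^2) < \<xi>"
    unfolding \<xi>_def using assms(3,4) by (intro real_sqrt_less_mono) simp
  then have "\<kappa> < \<xi>"
    using assms(1) by simp
  then have "0 < 1 - \<kappa> / \<xi>" "1 - \<kappa> / \<xi> < 1"
    using assms(1) by (auto simp: field_simps)
  have c: "0 < \<kappa> * \<theta> / \<sigma>^2"
    using assms(1-3) by simp
  have "0 < \<alpha>"
    unfolding \<alpha>_def using c \<open>0 < 1 - \<kappa> / \<xi>\<close> by (rule mult_pos_pos)
  have "\<alpha> < \<beta>"
    unfolding \<alpha>_def \<beta>_def using mult_strict_left_mono[OF \<open>1 - \<kappa> / \<xi> < 1\<close> c] c by simp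
  have "0 < \<zeta>" "0 \<le> \<nu>"
    unfolding \<zeta>_def \<nu>_def using \<open>\<kappa> < \<xi>\<close> assms(1,3) by simp_all
  have "\<xi> \<noteq> 0" "\<kappa> \<noteq> 0" "\<theta> \<noteq> 0" "\<sigma> \<noteq> 0"
    using \<open>\<kappa> < \<xi>\<close> assms(1-3) by auto
  then have "\<nu> = \<zeta> * \<alpha> / \<beta>"
    unfolding \<zeta>_def \<nu>_def \<alpha>_def \<beta>_def by (simp add: field_simps)
  then have "strict_mono_on {0<..} (\<lambda>r. exp (- \<nu> * r) * kummerM \<alpha> \<beta> (\<zeta> * r))"
    using \<open>0 < \<alpha>\<close> \<open>\<alpha> < \<beta>\<close> \<open>0 < \<zeta>\<close> by (simp only: exp_mult_kummerM_strict_mono)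
  moreover have "strict_antimono_on {0<..} (\<lambda>r. exp (- \<nu> * r) * kummerU \<alpha> \<beta> (\<zeta> * r))"
    using \<open>0 < \<alpha>\<close> \<open>0 \<le> \<nu>\<close> \<open>0 < \<zeta>\<close> by (rule exp_mult_kummerU_strict_antimono)
  ultimately show ?thesis ..
qed

end
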